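(* Let $g:[0,\infty)\to[0,1]$ be continuously differentiable and strictly decreasing, and let $$f(x)=1-e^{-x}\big[1-g(x)(x+1)\big]-\int_0^xg(z)e^{-z}\,dz .$$ Assume $\min_{x\ge0}f(x)=g(0)$. For $\tau,\tau'\ge0$ define $$H(\tau,\tau')=1-e^{-\tau'}-\int_0^{\tau'}g(z)e^{-z}\,dz+g(\tau')\cdot\begin{cases}\tau e^{-\tau'} & \tau\le\tau',\\ \tau'e^{-\tau'}+e^{-\tau'}-e^{-\tau} & \tau>\tau'.\end{cases}$$ Then $H(\tau,\tau')\ge g(0)\,(1-e^{-\tau})$ for all $\tau,\tau'\ge0$. *)

theory Defs
  imports "HOL-Analysis.Analysis"
begin

definition fF :: "(real \<Rightarrow> real) \<Rightarrow> real \<Rightarrow> real" where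
  "fF g x = 1 - exp (-x) * (1 - g x * (x + 1)) - integral {0..x} (\<lambda>z. g z * exp (-z))"

definition HH :: "(real \<Rightarrow> real) \<Rightarrow> real \<Rightarrow> real \<Rightarrow> real" where
  "HH g \<tau> \<tau>' = 1 - exp (-\<tau>') - integral {0..\<tau>'} (\<lambda>z. g z * exp (-z))
     + g \<tau>' * (if \<tau> \<le> \<tau>' then \<tau> * exp (-\<tau>')
               else \<tau>' * exp (-\<tau>') + exp (-\<tau>') - exp (-\<tau>))"

end

theory Submission
  imports Defs
begin

text \<open>In both branches \<open>H(\<tau>, \<tau>')\<close> equals \<open>f(\<tau>')\<close> minus a nonnegative multiple of \<open>g(\<tau>')\<close>.
  Since \<open>f(\<tau>') \<ge> g(0) \<ge> g(\<tau>') \<ge> 0\<close>, it suffices that this subtracted term is at most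
  \<open>g(0) exp(-\<tau>)\<close>; for \<open>\<tau> \<le> \<tau>'\<close> this follows from the convexity estimate
  \<open>(\<tau>' - \<tau>) exp(-\<tau>') \<le> exp(-\<tau>) - exp(-\<tau>')\<close>.\<close>

lemma exp_neg_diff_ge:
  fixes t t' :: real
  assumes "t \<le> t'"
  shows "(t' - t) * exp (-t') \<le> exp (-t) - exp (-t')"
proof -
  have "exp (-t') * (1 + (t' - t)) \<le> exp (-t') * exp (t' - t)"
    using exp_ge_add_one_self[of "t' - t"] by (intro mult_left_mono) auto
  also have "\<dots> = exp (-t)"
    by (simp flip: exp_add)
  finally show ?thesis
    by (simp add: algebra_simps)
qed

lemma HH_eq_fF_le:
  assumes "\<tau> \<le> \<tau>'"
  shows "HH g \<tau> \<tau>' = fF g \<tau>' - g \<tau>' * exp (-\<tau>') - (\<tau>' - \<tau>) * g \<tau>' * exp (-\<tau>')"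
  using assms unfolding HH_def fF_def by (simp add: algebra_simps)

lemma HH_eq_fF_gt:
  assumes "\<not> \<tau> \<le> \<tau>'"
  shows "HH g \<tau> \<tau>' = fF g \<tau>' - g \<tau>' * exp (-\<tau>)"
  using assms unfolding HH_def fF_def by (simp add: algebra_simps)

lemma HH_ge_of_fF_ge:
  assumes f: "c \<le> fF g \<tau>'" and g: "0 \<le> g \<tau>'" "g \<tau>' \<le> c"
  shows "c * (1 - exp (-\<tau>)) \<le> HH g \<tau> \<tau>'"
proof (cases "\<tau> \<le> \<tau>'")
  case True
  have "(\<tau>' - \<tau>) * g \<tau>' * exp (-\<tau>') \<le> (\<tau>' - \<tau>) * c * exp (-\<tau>')"
    using True g by (intro mult_right_mono mult_left_mono) auto
  also have "\<dots> \<le> c * (exp (-\<tau>) - exp (-\<tau>'))"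
    using exp_neg_diff_ge[OF True] g by (simp add: mult.commute mult.left_commute mult_left_mono)
  finally have "(\<tau>' - \<tau>) * g \<tau>' * exp (-\<tau>') \<le> c * exp (-\<tau>) - c * exp (-\<tau>')"
    by (simp only: right_diff_distrib)
  moreover have "g \<tau>' * exp (-\<tau>') \<le> c * exp (-\<tau>')"
    using g by simp
  ultimately show ?thesis
    using f HH_eq_fF_le[OF True, of g] by (simp only: right_diff_distrib mult_1_right)
next
  case False
  have "g \<tau>' * exp (-\<tau>) \<le> c * exp (-\<tau>)"
    using g by simp
  then show ?thesis
    using f HH_eq_fF_gt[OF False, of g] by (simp only: right_diff_distrib mult_1_right)
qed

theorem mainTheorem14:
  fixes g :: "real \<Rightarrow> real"
  assumes range: "\<And>x. x \<ge> 0 \<Longrightarrow> g x \<in> {0..1}"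
    and C1: "\<exists>g'. (\<forall>x\<ge>0. (g has_real_derivative g' x) (at x within {0..}))
                 \<and> continuous_on {0..} g'"
    and decr: "strict_antimono_on {0..} g"
    and minf: "\<exists>x0. is_arg_min (fF g) (\<lambda>x. x \<ge> 0) x0 \<and> fF g x0 = g 0"
  shows "\<forall>\<tau>\<ge>0. \<forall>\<tau>'\<ge>0. HH g \<tau> \<tau>' \<ge> g 0 * (1 - exp (-\<tau>))"
proof (intro allI impI)
  fix \<tau> \<tau>' :: real
  assume "\<tau>' \<ge> 0"
  obtain x0 where "is_arg_min (fF g) (\<lambda>x. x \<ge> 0) x0" "fF g x0 = g 0"
    using minf by blast
  then have "g 0 \<le> fF g \<tau>'"
    using \<open>\<tau>' \<ge> 0\<close> unfolding is_arg_min_def by force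
  moreover have "0 \<le> g \<tau>'"
    using range \<open>\<tau>' \<ge> 0\<close> by auto
  moreover have "g \<tau>' \<le> g 0"
    using decr \<open>\<tau>' \<ge> 0\<close> unfolding monotone_on_def
    by (cases "\<tau>' = 0") (auto simp: less_eq_real_def)
  ultimately show "g 0 * (1 - exp (-\<tau>)) \<le> HH g \<tau> \<tau>'"
    by (rule HH_ge_of_fF_ge)
qed

end
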